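(* Let $G$ be a connected finite simple graph of order $p$ and size $q$, with normal graph algebra $\mathcal{N}G$ over a field $\mathbb{F}$ of characteristic not $2$, such that every set of two distinct edges of $G$ is the support of $u^2$ for some $u\in U_G$. Suppose also that $G$ is not edge-square. Then $p\ge4$, $q=p$ or $q=p+1$, and: (1) if $q=p$, then $G$ is an even cycle and $\mathcal{N}G$ is isomorphic to $\mathbb{F}^0\oplus\mathcal{T}_{p-1}$; (2) if $q=p+1$, then $\mathcal{N}G$ is isomorphic to $\mathcal{T}_p$.
   Context: A normal algebra is a finite-dimensional $\mathbb{F}$-vector space $U\oplus\mathfrak{Z}$ with commutative bilinear product satisfying $U\mathfrak{Z}=0$, $\mathfrak{Z}\mathfrak{Z}=0$, $UU\subseteq\mathfrak{Z}$; isomorphisms are product-preserving linear bijections respecting the $U$- and $\mathfrak{Z}$-parts; direct sums are componentwise. For a finite simple graph $G$ with vertex set $VG$ and edge set $EG$, $\mathcal{N}G$ has $U_G$ with basis $VG$ and $\mathfrak{Z}_G$ with basis $EG$ (edge with endpoints $x,y$ written $[x,y]$), product determined by: for distinct vertices $x,y$, $xy=[x,y]$ if adjacent and $0$ otherwise; $x^2=\sum_{y\sim x}[x,y]$. The support of $\mathfrak{z}\in\mathfrak{Z}_G$ is the set of edges with nonzero coefficient in $\mathfrak{z}$. $G$ is edge-square if for every edge $\mathfrak{e}$ there is $u\in U_G$ with $u^2=\mathfrak{e}$. $\mathbb{F}^0$ is the normal algebra with $U=\mathbb{F}$, $\mathfrak{Z}=0$, all products $0$. $\mathcal{T}_n$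 is the normal algebra with $U$-basis $w_1,\dots,w_n$, $\mathfrak{Z}$-basis $\mathfrak{z}_0,\dots,\mathfrak{z}_n$, products $w_iw_j=\mathfrak{z}_0+\delta_{ij}\mathfrak{z}_i$ ($1\le i,j\le n$), all other basis products $0$. *)

theory Defs
  imports Main
begin

text \<open>A normal algebra over a field 'f is given by a finite basis I of U, a finite basis J
of Z, and structure constants sc i k j: the coefficient of the Z-basis vector j in the
product of the U-basis vectors i and k.  Products U Z and Z Z are zero, so the algebra
is determined by the bilinear map U x U -> Z.\<close>

record ('i, 'j, 'f) nalg =
  ubasis :: "'i set"
  zbasis :: "'j set"
  sc :: "'i \<Rightarrow> 'i \<Rightarrow> 'j \<Rightarrow> 'f"

definition Uvec :: "('i, 'j, 'f::field) nalg \<Rightarrow> ('i \<Rightarrow> 'f) set" where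
  "Uvec A = {u. \<forall>i. i \<notin> ubasis A \<longrightarrow> u i = 0}"

definition Zvec :: "('i, 'j, 'f::field) nalg \<Rightarrow> ('j \<Rightarrow> 'f) set" where
  "Zvec A = {z. \<forall>j. j \<notin> zbasis A \<longrightarrow> z j = 0}"

definition nprod :: "('i, 'j, 'f::field) nalg \<Rightarrow> ('i \<Rightarrow> 'f) \<Rightarrow> ('i \<Rightarrow> 'f) \<Rightarrow> ('j \<Rightarrow> 'f)" where
  "nprod A u v = (\<lambda>j. if j \<in> zbasis A then
      (\<Sum>i\<in>ubasis A. \<Sum>k\<in>ubasis A. u i * v k * sc A i k j) else 0)"

definition linear_on :: "('a \<Rightarrow> 'f::field) set \<Rightarrow> (('a \<Rightarrow> 'f) \<Rightarrow> ('b \<Rightarrow> 'f)) \<Rightarrow> bool" where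
  "linear_on S f \<longleftrightarrow>
     (\<forall>u\<in>S. \<forall>v\<in>S. f (\<lambda>i. u i + v i) = (\<lambda>i. f u i + f v i)) \<and>
     (\<forall>c. \<forall>u\<in>S. f (\<lambda>i. c * u i) = (\<lambda>i. c * f u i))"

definition nalg_iso :: "('i, 'j, 'f::field) nalg \<Rightarrow> ('i2, 'j2, 'f) nalg \<Rightarrow> bool" where
  "nalg_iso A B \<longleftrightarrow> (\<exists>\<phi> \<psi>.
      linear_on (Uvec A) \<phi> \<and> bij_betw \<phi> (Uvec A) (Uvec B) \<and>
      linear_on (Zvec A) \<psi> \<and> bij_betw \<psi> (Zvec A) (Zvec B) \<and>
      (\<forall>u\<in>Uvec A. \<forall>v\<in>Uvec A. \<psi> (nprod A u v) = nprod B (\<phi> u) (\<phi> v)))"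

definition nalg_sum :: "('i, 'j, 'f::field) nalg \<Rightarrow> ('i2, 'j2, 'f) nalg
    \<Rightarrow> ('i + 'i2, 'j + 'j2, 'f) nalg" where
  "nalg_sum A B = \<lparr> ubasis = Inl ` ubasis A \<union> Inr ` ubasis B,
     zbasis = Inl ` zbasis A \<union> Inr ` zbasis B,
     sc = (\<lambda>x y z. case (x, y, z) of
             (Inl i, Inl k, Inl j) \<Rightarrow> sc A i k j
           | (Inr i, Inr k, Inr j) \<Rightarrow> sc B i k j
           | _ \<Rightarrow> 0) \<rparr>"

definition F0 :: "(unit, nat, 'f::field) nalg" where
  "F0 = \<lparr> ubasis = UNIV, zbasis = {}, sc = (\<lambda>_ _ _. 0) \<rparr>"

text \<open>T_n: U-basis w_1..w_n, Z-basis z_0..z_n, w_i w_k = z_0 + delta_ik z_i.\<close>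

definition T_alg :: "nat \<Rightarrow> (nat, nat, 'f::field) nalg" where
  "T_alg n = \<lparr> ubasis = {1..n}, zbasis = {0..n},
     sc = (\<lambda>i k j. if i \<in> {1..n} \<and> k \<in> {1..n} then
             (if j = 0 then 1 else if j = i \<and> i = k then 1 else 0) else 0) \<rparr>"

definition simple_graph :: "'a set \<Rightarrow> 'a set set \<Rightarrow> bool" where
  "simple_graph V E \<longleftrightarrow> finite V \<and> (\<forall>e\<in>E. e \<subseteq> V \<and> card e = 2)"

definition adj :: "'a set set \<Rightarrow> 'a \<Rightarrow> 'a \<Rightarrow> bool" where
  "adj E x y \<longleftrightarrow> x \<noteq> y \<and> {x, y} \<in> E"

definition connected_graph :: "'a set \<Rightarrow> 'a set set \<Rightarrow> bool" where
  "connected_graph V E \<longleftrightarrow> (\<forall>x\<in>V. \<forall>y\<in>V. (adj E)\<^sup>*\<^sup>* x y)"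

definition is_cycle :: "'a set \<Rightarrow> 'a set set \<Rightarrow> bool" where
  "is_cycle V E \<longleftrightarrow> card V \<ge> 3 \<and>
     (\<exists>f. bij_betw f {0..<card V} V \<and>
          E = {{f i, f (Suc i mod card V)} | i. i < card V})"

definition is_even_cycle :: "'a set \<Rightarrow> 'a set set \<Rightarrow> bool" where
  "is_even_cycle V E \<longleftrightarrow> is_cycle V E \<and> even (card V)"

text \<open>The normal graph algebra NG: U-basis VG, Z-basis EG; for distinct x y,
x y = [x,y] if adjacent, else 0; x^2 = sum of the edges at x.\<close>

definition NG :: "'a set \<Rightarrow> 'a set set \<Rightarrow> ('a, 'a set, 'f::field) nalg" where
  "NG V E = \<lparr> ubasis = V, zbasis = E,
     sc = (\<lambda>x y e. if e \<in> E \<and> x \<in> V \<and> y \<in> V \<and>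
                      (if x = y then x \<in> e else e = {x, y}) then 1 else 0) \<rparr>"

definition zsupport :: "'a set set \<Rightarrow> ('a set \<Rightarrow> 'f::field) \<Rightarrow> 'a set set" where
  "zsupport E z = {e \<in> E. z e \<noteq> 0}"

definition edge_square :: "'a set \<Rightarrow> 'a set set \<Rightarrow> 'f::field itself \<Rightarrow> bool" where
  "edge_square V E (_::'f itself) \<longleftrightarrow>
     (\<forall>e\<in>E. \<exists>u \<in> Uvec (NG V E :: ('a, 'a set, 'f) nalg).
         nprod (NG V E) u u = (\<lambda>e'. if e' = e then 1 else 0))"

end

(*
  Write L for the incidence map U -> Z, sending a to the edge sums e |-> a x + a y; in NG the
  product is u v = L u * L v coordinatewise.  Every pair of edges being the support of a square,
  together with an edge e0 that is not a square, forces the image of L to be a hyperplane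
  sum_e z_e w_e = 0 whose normal z vanishes nowhere.  Rescaling the coordinates by z turns the
  product into that of T_n with n = |E| - 1, the coordinate of e0 playing the role of z_0.

  On a connected graph the kernel of L has dimension at most one, a kernel vector alternating in
  sign along edges.  If the kernel is zero, NG is isomorphic to T_(|E|-1), and comparing U-bases
  gives |E| = |V| + 1.  Otherwise the kernel contributes a summand F^0 and |E| = |V|; the
  hyperplane equation at the edges through a vertex rules out degree one, so the graph is
  2-regular, hence a cycle, and the alternating kernel vector makes the cycle even because
  char F is not 2.
*)
theory Submission
  imports Defs "HOL-Library.Function_Algebras" HOL.Vector_Spaces
begin

section \<open>Coordinate spaces over a field\<close>

(* Function_Algebras provides the pointwise additive group on 'x => 'f; adding this scalar
   action gives a vector space, so that span and independence are available. *)
definition scale_fun :: "'f::field \<Rightarrow> ('x \<Rightarrow> 'f) \<Rightarrow> ('x \<Rightarrow> 'f)" where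
  "scale_fun c a = (\<lambda>i. c * a i)"

interpretation fun_vs: vector_space "scale_fun :: 'f::field \<Rightarrow> ('x \<Rightarrow> 'f) \<Rightarrow> _"
  by unfold_locales (auto simp: scale_fun_def fun_eq_iff algebra_simps)

lemma scale_fun_apply: "scale_fun c a x = c * a x"
  by (simp add: scale_fun_def)

lemma sum_fun_apply: "sum f A x = (\<Sum>a\<in>A. f a x)"
  by (induction A rule: infinite_finite_induct) auto

definition coord_space :: "'i set \<Rightarrow> ('i \<Rightarrow> 'f::field) set" where
  "coord_space A = {a. \<forall>i. i \<notin> A \<longrightarrow> a i = 0}"

lemma Uvec_eq_coord_space: "Uvec A = coord_space (ubasis A)"
  by (simp add: Uvec_def coord_space_def)

lemma Zvec_eq_coord_space: "Zvec A = coord_space (zbasis A)"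
  by (simp add: Zvec_def coord_space_def)

lemma coord_space_add [simp]: "a \<in> coord_space A \<Longrightarrow> b \<in> coord_space A \<Longrightarrow> a + b \<in> coord_space A"
  and coord_space_diff [simp]: "a \<in> coord_space A \<Longrightarrow> b \<in> coord_space A \<Longrightarrow> a - b \<in> coord_space A"
  and coord_space_scale [simp]: "a \<in> coord_space A \<Longrightarrow> scale_fun c a \<in> coord_space A"
  and coord_space_zero [simp]: "0 \<in> coord_space A"
  by (simp_all add: coord_space_def scale_fun_apply)

lemma coord_space_sum: "(\<And>i. i \<in> I \<Longrightarrow> a i \<in> coord_space A) \<Longrightarrow> sum a I \<in> coord_space A"
  by (simp add: coord_space_def sum_fun_apply)

definition unit_vec :: "'i \<Rightarrow> 'i \<Rightarrow> 'f::field" where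
  "unit_vec x = (\<lambda>y. if y = x then 1 else 0)"

lemma unit_vec_eq_iff: "unit_vec x = (unit_vec y :: 'i \<Rightarrow> 'f::field) \<longleftrightarrow> x = y"
  by (auto simp: unit_vec_def fun_eq_iff)

lemma unit_vec_in_coord_space: "x \<in> A \<Longrightarrow> unit_vec x \<in> coord_space A"
  by (simp add: unit_vec_def coord_space_def)

lemma coord_space_expansion:
  assumes "finite A" "a \<in> coord_space A"
  shows "a = (\<Sum>x\<in>A. scale_fun (a x) (unit_vec x))"
proof
  fix y
  have "(\<Sum>x\<in>A. scale_fun (a x) (unit_vec x)) y = (\<Sum>x\<in>A. if y = x then a x else 0)"
    unfolding sum_fun_apply by (rule sum.cong) (auto simp: unit_vec_def scale_fun_apply)
  also have "\<dots> = a y"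
    using assms by (simp add: coord_space_def)
  finally show "a y = (\<Sum>x\<in>A. scale_fun (a x) (unit_vec x)) y" by simp
qed

lemma independent_unit_vecs: "fun_vs.independent (unit_vec ` A :: ('i \<Rightarrow> 'f::field) set)"
  unfolding fun_vs.independent_explicit_module
proof (intro allI impI)
  fix t u and v :: "'i \<Rightarrow> 'f"
  assume t: "finite t" "t \<subseteq> unit_vec ` A" and combination: "(\<Sum>w\<in>t. scale_fun (u w) w) = 0"
    and v: "v \<in> t"
  then obtain x where x: "v = unit_vec x" by blast
  have "0 = (\<Sum>w\<in>t. scale_fun (u w) w) x"
    using combination by simp
  also have "\<dots> = (\<Sum>w\<in>t. if w = v then u w else 0)"
    unfolding sum_fun_apply
  proof (rule sum.cong [OF refl])
    fix w assume "w \<in> t"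
    then obtain y where "w = unit_vec y" using t by blast
    then show "scale_fun (u w) w x = (if w = v then u w else 0)"
      using x unit_vec_eq_iff[of y x] by (auto simp: unit_vec_def scale_fun_apply)
  qed
  also have "\<dots> = u v"
    using t v by simp
  finally show "u v = 0" by simp
qed

lemma linear_on_zero:
  fixes \<phi> :: "('i \<Rightarrow> 'f::field) \<Rightarrow> ('j \<Rightarrow> 'f)"
  assumes "linear_on (coord_space A) \<phi>"
  shows "\<phi> 0 = 0"
proof -
  have "\<phi> (\<lambda>i. 0 * (0 :: 'i \<Rightarrow> 'f) i) = (\<lambda>i. 0 * \<phi> 0 i)"
    using assms coord_space_zero unfolding linear_on_def by blast
  then show ?thesis by (simp add: zero_fun_def)
qed

lemma linear_on_add:
  "linear_on S \<phi> \<Longrightarrow> u \<in> S \<Longrightarrow> v \<in> S \<Longrightarrow> \<phi> (u + v) = \<phi> u + \<phi> v"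
  unfolding linear_on_def plus_fun_def by blast

lemma linear_on_scale:
  "linear_on S \<phi> \<Longrightarrow> u \<in> S \<Longrightarrow> \<phi> (scale_fun c u) = scale_fun c (\<phi> u)"
  unfolding linear_on_def scale_fun_def by blast

lemma linear_on_sum:
  assumes lin: "linear_on (coord_space A) \<phi>" and a: "\<And>i. i \<in> I \<Longrightarrow> a i \<in> coord_space A"
  shows "\<phi> (\<Sum>i\<in>I. scale_fun (c i) (a i)) = (\<Sum>i\<in>I. scale_fun (c i) (\<phi> (a i)))"
  using a
proof (induction I rule: infinite_finite_induct)
  case (insert i I)
  have rest: "(\<Sum>j\<in>I. scale_fun (c j) (a j)) \<in> coord_space A"
    using insert.prems by (simp add: coord_space_sum)
  have "\<phi> (\<Sum>j\<in>insert i I. scale_fun (c j) (a j))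
      = \<phi> (scale_fun (c i) (a i)) + \<phi> (\<Sum>j\<in>I. scale_fun (c j) (a j))"
    unfolding sum.insert[OF insert.hyps]
    by (rule linear_on_add[OF lin coord_space_scale[OF insert.prems] rest]) simp
  also have "\<dots> = scale_fun (c i) (\<phi> (a i)) + (\<Sum>j\<in>I. scale_fun (c j) (\<phi> (a j)))"
    using insert.IH insert.prems linear_on_scale[OF lin] by simp
  finally show ?case
    unfolding sum.insert[OF insert.hyps] .
qed (simp_all add: linear_on_zero[OF lin])

lemma card_le_of_linear_onto:
  fixes \<phi> :: "('i \<Rightarrow> 'f::field) \<Rightarrow> ('j \<Rightarrow> 'f)"
  assumes A: "finite A" and lin: "linear_on (coord_space A) \<phi>"
    and onto: "coord_space B \<subseteq> \<phi> ` coord_space A"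
  shows "finite B \<and> card B \<le> card A"
proof -
  let ?S = "\<phi> ` unit_vec ` A"
  have spanning: "(unit_vec ` B :: ('j \<Rightarrow> 'f) set) \<subseteq> fun_vs.span ?S"
  proof
    fix b :: "'j \<Rightarrow> 'f" assume "b \<in> unit_vec ` B"
    then have "b \<in> coord_space B"
      by (auto intro: unit_vec_in_coord_space)
    then obtain a where a: "a \<in> coord_space A" and b: "b = \<phi> a"
      using onto by blast
    have "b = \<phi> (\<Sum>x\<in>A. scale_fun (a x) (unit_vec x))"
      unfolding b by (rule arg_cong[OF coord_space_expansion[OF A a]])
    also have "\<dots> = (\<Sum>x\<in>A. scale_fun (a x) (\<phi> (unit_vec x)))"
      by (rule linear_on_sum[OF lin unit_vec_in_coord_space])
    also have "\<dots> \<in> fun_vs.span ?S"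
      by (intro fun_vs.span_sum fun_vs.span_scale fun_vs.span_base imageI)
    finally show "b \<in> fun_vs.span ?S" .
  qed
  have "finite ?S"
    using A by blast
  from fun_vs.independent_span_bound[OF this independent_unit_vecs spanning]
  have "finite (unit_vec ` B :: ('j \<Rightarrow> 'f) set)" and "card (unit_vec ` B :: ('j \<Rightarrow> 'f) set) \<le> card ?S"
    by blast+
  moreover have "inj_on (unit_vec :: 'j \<Rightarrow> 'j \<Rightarrow> 'f) B"
    by (simp add: inj_on_def unit_vec_eq_iff)
  moreover have "card ?S \<le> card A"
    using A by (simp add: card_image_le image_image)
  ultimately show ?thesis
    using finite_imageD card_image by (metis le_trans)
qed

lemma linear_on_diff:
  assumes lin: "linear_on (coord_space A) \<phi>" and uv: "u \<in> coord_space A" "v \<in> coord_space A"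
  shows "\<phi> (u - v) = \<phi> u - \<phi> v"
proof -
  have "u - v = u + scale_fun (-1) v"
    by (simp add: fun_eq_iff scale_fun_apply)
  then have "\<phi> (u - v) = \<phi> (u + scale_fun (-1) v)"
    by (rule arg_cong)
  also have "\<dots> = \<phi> u + scale_fun (-1) (\<phi> v)"
    using uv linear_on_add[OF lin] linear_on_scale[OF lin] coord_space_scale by metis
  finally show ?thesis
    by (simp add: fun_eq_iff scale_fun_apply)
qed

lemma linear_on_inv_into:
  fixes \<phi> :: "('i \<Rightarrow> 'f::field) \<Rightarrow> ('j \<Rightarrow> 'f)"
  assumes lin: "linear_on (coord_space A) \<phi>"
    and bij: "bij_betw \<phi> (coord_space A) (coord_space B)"
  shows "linear_on (coord_space B) (inv_into (coord_space A) \<phi>)"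
proof -
  let ?\<psi> = "inv_into (coord_space A) \<phi>"
  have inj: "inj_on \<phi> (coord_space A)" and surj: "\<phi> ` coord_space A = coord_space B"
    using bij by (simp_all add: bij_betw_def)
  have \<psi>: "?\<psi> u \<in> coord_space A" "\<phi> (?\<psi> u) = u" if "u \<in> coord_space B" for u
    using that surj inv_into_into f_inv_into_f by metis+
  have \<psi>_eqI: "?\<psi> (\<phi> a) = a" if "a \<in> coord_space A" for a
    using inv_into_f_f[OF inj that] .
  show ?thesis
    unfolding linear_on_def
  proof (intro conjI ballI allI)
    fix u v :: "'j \<Rightarrow> 'f" assume u: "u \<in> coord_space B" and v: "v \<in> coord_space B"
    have "u + v = \<phi> (?\<psi> u + ?\<psi> v)"
      using u v \<psi> by (simp add: linear_on_add[OF lin])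
    then have "?\<psi> (u + v) = ?\<psi> u + ?\<psi> v"
      using u v \<psi> \<psi>_eqI coord_space_add by metis
    then show "?\<psi> (\<lambda>i. u i + v i) = (\<lambda>i. ?\<psi> u i + ?\<psi> v i)"
      by (simp add: plus_fun_def)
  next
    fix c and u :: "'j \<Rightarrow> 'f" assume u: "u \<in> coord_space B"
    have "scale_fun c u = \<phi> (scale_fun c (?\<psi> u))"
      using u \<psi> by (simp add: linear_on_scale[OF lin])
    then have "?\<psi> (scale_fun c u) = scale_fun c (?\<psi> u)"
      using u \<psi> \<psi>_eqI coord_space_scale by metis
    then show "?\<psi> (\<lambda>i. c * u i) = (\<lambda>i. c * ?\<psi> u i)"
      by (simp add: scale_fun_def)
  qed
qed

section \<open>Normal algebras\<close>

lemma nalg_iso_card_ubasis: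
  fixes A :: "('i, 'j, 'f::field) nalg" and B :: "('i2, 'j2, 'f) nalg"
  assumes iso: "nalg_iso A B" and fin: "finite (ubasis A)"
  shows "finite (ubasis B) \<and> card (ubasis B) = card (ubasis A)"
proof -
  obtain \<phi> :: "('i \<Rightarrow> 'f) \<Rightarrow> ('i2 \<Rightarrow> 'f)" where lin: "linear_on (coord_space (ubasis A)) \<phi>"
    and bij: "bij_betw \<phi> (coord_space (ubasis A)) (coord_space (ubasis B))"
    using iso unfolding nalg_iso_def Uvec_eq_coord_space by blast
  have B: "finite (ubasis B) \<and> card (ubasis B) \<le> card (ubasis A)"
    using card_le_of_linear_onto[OF fin lin] bij by (simp add: bij_betw_def)
  moreover have "card (ubasis A) \<le> card (ubasis B)"
    using card_le_of_linear_onto[OF conjunct1[OF B] linear_on_inv_into[OF lin bij]]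
      bij_betw_inv_into[OF bij] by (simp add: bij_betw_def)
  ultimately show ?thesis
    by simp
qed

lemma ubasis_T_alg: "ubasis (T_alg n) = {1..n}"
  by (simp add: T_alg_def)

lemma Uvec_T_alg: "Uvec (T_alg n :: (nat, nat, 'f::field) nalg) = coord_space {1..n}"
  by (simp add: Uvec_eq_coord_space T_alg_def)

lemma Zvec_T_alg: "Zvec (T_alg n :: (nat, nat, 'f::field) nalg) = coord_space {0..n}"
  by (simp add: Zvec_eq_coord_space T_alg_def)

lemma nprod_T_alg:
  "nprod (T_alg n :: (nat, nat, 'f::field) nalg) c d j =
     (if j = 0 then (\<Sum>i=1..n. c i) * (\<Sum>k=1..n. d k) else if j \<in> {1..n} then c j * d j else 0)"
proof -
  have "(\<Sum>i=1..n. \<Sum>k=1..n. c i * d k * (if j = i \<and> i = k then 1 else 0)) = c j * d j"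
    if "j \<in> {1..n}"
  proof -
    have "(\<Sum>k=1..n. c i * d k * (if j = i \<and> i = k then 1 else 0))
        = (if i = j then c j * d j else 0)" if "i \<in> {1..n}" for i
      using that \<open>j \<in> {1..n}\<close>
      by (cases "i = j") (simp_all add: if_distrib[of "\<lambda>x. _ * x"] sum.delta cong: if_cong)
    then show ?thesis
      using that by (simp add: sum.delta)
  qed
  then show ?thesis
    by (auto simp: nprod_def T_alg_def sum_product)
qed

lemma Uvec_sum_F0:
  "c \<in> Uvec (nalg_sum (F0 :: (unit, nat, 'f::field) nalg) B) \<longleftrightarrow> c \<circ> Inr \<in> Uvec B"
  unfolding Uvec_def nalg_sum_def F0_def by (auto, metis imageI sum.exhaust UNIV_I)

lemma Zvec_sum_F0:
  "c \<in> Zvec (nalg_sum (F0 :: (unit, nat, 'f::field) nalg) B) \<longleftrightarrow>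
     (\<forall>u. c (Inl u) = 0) \<and> c \<circ> Inr \<in> Zvec B"
  unfolding Zvec_def nalg_sum_def F0_def by (auto, metis imageI sum.exhaust)

lemma card_ubasis_sum_F0:
  assumes "finite (ubasis B)"
  shows "card (ubasis (nalg_sum (F0 :: (unit, nat, 'f::field) nalg) B)) = card (ubasis B) + 1"
  using assms by (simp add: nalg_sum_def F0_def UNIV_unit card_insert_if card_image image_iff)

lemma sum_unit_plus:
  fixes g :: "unit + 'b \<Rightarrow> 'c::comm_monoid_add"
  assumes "finite I" "g (Inl ()) = 0"
  shows "(\<Sum>x\<in>range Inl \<union> Inr ` I. g x) = (\<Sum>i\<in>I. g (Inr i))"
proof -
  have "range Inl \<union> Inr ` I = insert (Inl ()) (Inr ` I)"
    by (auto simp: UNIV_unit)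
  then show ?thesis
    using assms by (simp add: image_iff sum.reindex)
qed

lemma nprod_sum_F0:
  assumes fin: "finite (ubasis B)"
  shows "nprod (nalg_sum (F0 :: (unit, nat, 'f::field) nalg) B) c d =
    case_sum (\<lambda>_. 0) (nprod B (c \<circ> Inr) (d \<circ> Inr))"
proof
  fix y
  let ?S = "nalg_sum (F0 :: (unit, nat, 'f) nalg) B"
  have U: "ubasis ?S = range Inl \<union> Inr ` ubasis B"
    by (simp add: nalg_sum_def F0_def)
  show "nprod ?S c d y = case_sum (\<lambda>_. 0) (nprod B (c \<circ> Inr) (d \<circ> Inr)) y"
  proof (cases y)
    case (Inl u)
    then show ?thesis
      by (auto simp: nprod_def nalg_sum_def F0_def)
  next
    case (Inr j)
    have sc: "sc ?S (Inl u) x' (Inr j) = 0" "sc ?S x (Inl u) (Inr j) = 0"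
      "sc ?S (Inr i) (Inr k) (Inr j) = sc B i k j" for u x x' i k
      by (simp_all add: nalg_sum_def split: sum.split)
    have "(\<Sum>x\<in>ubasis ?S. \<Sum>x'\<in>ubasis ?S. c x * d x' * sc ?S x x' (Inr j))
        = (\<Sum>x\<in>ubasis ?S. \<Sum>k\<in>ubasis B. c x * d (Inr k) * sc ?S x (Inr k) (Inr j))"
      unfolding U using fin by (simp add: sum_unit_plus sc)
    also have "\<dots> = (\<Sum>i\<in>ubasis B. \<Sum>k\<in>ubasis B. c (Inr i) * d (Inr k) * sc B i k j)"
      unfolding U using fin by (simp add: sum_unit_plus sc)
    finally show ?thesis
      using Inr by (auto simp: nprod_def nalg_sum_def F0_def)
  qed
qed

lemma linear_onto_prescribed_value:
  fixes A :: "('i, 'j, 'f::field) nalg" and B :: "('i2, 'j2, 'f) nalg"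
    and \<phi> :: "('i \<Rightarrow> 'f) \<Rightarrow> ('i2 \<Rightarrow> 'f)"
  assumes lin: "linear_on (Uvec A) \<phi>" and onto: "\<phi> ` Uvec A = Uvec B"
    and s: "s \<in> Uvec A" "\<phi> s = 0" "s x0 \<noteq> 0"
    and b: "b \<in> Uvec B"
  shows "\<exists>a\<in>Uvec A. \<phi> a = b \<and> a x0 = t"
proof -
  note lin' = lin[unfolded Uvec_eq_coord_space] and s' = s(1)[unfolded Uvec_eq_coord_space]
  have "b \<in> \<phi> ` Uvec A"
    using b onto by simp
  then obtain a where a: "a \<in> Uvec A" "\<phi> a = b"
    by (metis imageE)
  define a' where "a' = a + scale_fun ((t - a x0) / s x0) s"
  have "\<phi> a' = \<phi> a + scale_fun ((t - a x0) / s x0) (\<phi> s)"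
    using a s' unfolding a'_def Uvec_eq_coord_space
    by (simp add: linear_on_add[OF lin'] linear_on_scale[OF lin'])
  then have "\<phi> a' = b"
    using s(2) a(2) by (simp add: fun_eq_iff scale_fun_apply)
  moreover have "a' \<in> Uvec A"
    using a s' by (simp add: a'_def Uvec_eq_coord_space)
  moreover have "a' x0 = t"
    using s(3) by (simp add: a'_def scale_fun_apply)
  ultimately show ?thesis
    by blast
qed

lemma bij_betw_Uvec_sum_F0:
  fixes A :: "('i, 'j, 'f::field) nalg" and B :: "('i2, 'j2, 'f) nalg"
    and \<phi> :: "('i \<Rightarrow> 'f) \<Rightarrow> ('i2 \<Rightarrow> 'f)"
  assumes lin: "linear_on (Uvec A) \<phi>" and onto: "\<phi> ` Uvec A = Uvec B"
    and s: "s \<in> Uvec A" "\<phi> s = 0" "s x0 \<noteq> 0"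
    and ker: "\<forall>a\<in>Uvec A. \<phi> a = 0 \<longrightarrow> a x0 = 0 \<longrightarrow> a = 0"
  shows "bij_betw (\<lambda>a. case_sum (\<lambda>_. a x0) (\<phi> a))
    (Uvec A) (Uvec (nalg_sum (F0 :: (unit, nat, 'f) nalg) B))"
    (is "bij_betw ?\<Phi> _ _")
proof (rule bij_betw_imageI)
  note lin' = lin[unfolded Uvec_eq_coord_space]
  have \<Phi>_Inr: "?\<Phi> a \<circ> Inr = \<phi> a" for a
    by (simp add: fun_eq_iff)
  show "inj_on ?\<Phi> (Uvec A)"
  proof
    fix a b assume a: "a \<in> Uvec A" and b: "b \<in> Uvec A" and eq: "?\<Phi> a = ?\<Phi> b"
    have "\<phi> (a - b) = 0"
      using eq \<Phi>_Inr[of a] \<Phi>_Inr[of b] a b linear_on_diff[OF lin']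
      by (simp add: Uvec_eq_coord_space)
    moreover have "(a - b) x0 = 0"
      using fun_cong[OF eq, of "Inl ()"] by simp
    moreover have "a - b \<in> Uvec A"
      using a b by (simp add: Uvec_eq_coord_space)
    ultimately have "a - b = 0"
      using ker by blast
    then show "a = b" by simp
  qed
  show "?\<Phi> ` Uvec A = Uvec (nalg_sum F0 B)"
  proof
    show "?\<Phi> ` Uvec A \<subseteq> Uvec (nalg_sum F0 B)"
      using onto by (auto simp: Uvec_sum_F0 \<Phi>_Inr)
    show "Uvec (nalg_sum F0 B) \<subseteq> ?\<Phi> ` Uvec A"
    proof
      fix c assume "c \<in> Uvec (nalg_sum (F0 :: (unit, nat, 'f) nalg) B)"
      then have "c \<circ> Inr \<in> Uvec B"
        by (simp add: Uvec_sum_F0)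
      then obtain a where "a \<in> Uvec A" "\<phi> a = c \<circ> Inr" "a x0 = c (Inl ())"
        using linear_onto_prescribed_value[OF lin onto s] by blast
      moreover from this have "?\<Phi> a = c"
        unfolding fun_eq_iff by (simp split: sum.split)
      ultimately show "c \<in> ?\<Phi> ` Uvec A"
        by blast
    qed
  qed
qed

lemma bij_betw_Zvec_sum_F0:
  fixes A :: "('i, 'j, 'f::field) nalg" and B :: "('i2, 'j2, 'f) nalg"
    and \<psi> :: "('j \<Rightarrow> 'f) \<Rightarrow> ('j2 \<Rightarrow> 'f)"
  assumes bij: "bij_betw \<psi> (Zvec A) (Zvec B)"
  shows "bij_betw (\<lambda>w. case_sum (\<lambda>_. 0) (\<psi> w))
    (Zvec A) (Zvec (nalg_sum (F0 :: (unit, nat, 'f) nalg) B))"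
    (is "bij_betw ?\<Psi> _ _")
proof (rule bij_betw_imageI)
  show "inj_on ?\<Psi> (Zvec A)"
  proof
    fix w w' assume "w \<in> Zvec A" "w' \<in> Zvec A" "?\<Psi> w = ?\<Psi> w'"
    moreover from \<open>?\<Psi> w = ?\<Psi> w'\<close> have "\<psi> w = \<psi> w'"
      unfolding fun_eq_iff by (metis sum.case(2))
    ultimately show "w = w'"
      using bij by (auto simp: bij_betw_def inj_on_def)
  qed
  show "?\<Psi> ` Zvec A = Zvec (nalg_sum F0 B)"
  proof
    show "?\<Psi> ` Zvec A \<subseteq> Zvec (nalg_sum F0 B)"
      using bij_betwE[OF bij] by (auto simp: Zvec_sum_F0 comp_def)
    show "Zvec (nalg_sum F0 B) \<subseteq> ?\<Psi> ` Zvec A"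
    proof
      fix c assume "c \<in> Zvec (nalg_sum (F0 :: (unit, nat, 'f) nalg) B)"
      then have c: "\<forall>u. c (Inl u) = 0" "c \<circ> Inr \<in> Zvec B"
        by (simp_all add: Zvec_sum_F0)
      then obtain w where "w \<in> Zvec A" "\<psi> w = c \<circ> Inr"
        using bij unfolding bij_betw_def by (metis imageE)
      moreover have "?\<Psi> w = c"
        using c calculation(2) by (auto simp: fun_eq_iff split: sum.split)
      ultimately show "c \<in> ?\<Psi> ` Zvec A"
        by blast
    qed
  qed
qed

lemma nalg_iso_sum_F0:
  fixes A :: "('i, 'j, 'f::field) nalg" and B :: "('i2, 'j2, 'f) nalg"
    and \<phi> :: "('i \<Rightarrow> 'f) \<Rightarrow> ('i2 \<Rightarrow> 'f)" and \<psi> :: "('j \<Rightarrow> 'f) \<Rightarrow> ('j2 \<Rightarrow> 'f)"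
  assumes fin: "finite (ubasis B)"
    and lin_\<phi>: "linear_on (Uvec A) \<phi>" and onto_\<phi>: "\<phi> ` Uvec A = Uvec B"
    and lin_\<psi>: "linear_on (Zvec A) \<psi>" and bij_\<psi>: "bij_betw \<psi> (Zvec A) (Zvec B)"
    and mult: "\<forall>u\<in>Uvec A. \<forall>v\<in>Uvec A. \<psi> (nprod A u v) = nprod B (\<phi> u) (\<phi> v)"
    and s: "s \<in> Uvec A" "\<phi> s = 0" "s x0 \<noteq> 0"
    and ker: "\<forall>a\<in>Uvec A. \<phi> a = 0 \<longrightarrow> a x0 = 0 \<longrightarrow> a = 0"
  shows "nalg_iso A (nalg_sum (F0 :: (unit, nat, 'f) nalg) B)"
proof -
  let ?\<Phi> = "\<lambda>a. case_sum (\<lambda>_. a x0) (\<phi> a)" and ?\<Psi> = "\<lambda>w. case_sum (\<lambda>_. 0) (\<psi> w)"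
  have "linear_on (Uvec A) ?\<Phi>"
    using lin_\<phi> unfolding linear_on_def by (auto simp: fun_eq_iff split: sum.split)
  moreover have "linear_on (Zvec A) ?\<Psi>"
    using lin_\<psi> unfolding linear_on_def by (auto simp: fun_eq_iff split: sum.split)
  moreover have "\<forall>u\<in>Uvec A. \<forall>v\<in>Uvec A.
      ?\<Psi> (nprod A u v) = nprod (nalg_sum (F0 :: (unit, nat, 'f) nalg) B) (?\<Phi> u) (?\<Phi> v)"
    using mult by (simp add: nprod_sum_F0[OF fin] comp_def)
  ultimately show ?thesis
    unfolding nalg_iso_def
    using bij_betw_Uvec_sum_F0[OF lin_\<phi> onto_\<phi> s ker] bij_betw_Zvec_sum_F0[OF bij_\<psi>] by blast
qed

section \<open>Normal algebras whose squares fill a hyperplane\<close>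

locale hyperplane_image =
  fixes A :: "('i, 'j, 'f::field) nalg" and L :: "('i \<Rightarrow> 'f) \<Rightarrow> ('j \<Rightarrow> 'f)"
    and z :: "'j \<Rightarrow> 'f" and g :: "nat \<Rightarrow> 'j" and n :: nat
  assumes linear_L: "linear_on (Uvec A) L"
    and L_range: "a \<in> Uvec A \<Longrightarrow> L a \<in> Zvec A"
    and nprod_eq: "u \<in> Uvec A \<Longrightarrow> v \<in> Uvec A \<Longrightarrow> nprod A u v = (\<lambda>e. L u e * L v e)"
    and bij_g: "bij_betw g {0..n} (zbasis A)"
    and z_nonzero: "e \<in> zbasis A \<Longrightarrow> z e \<noteq> 0"
    and image_L: "w \<in> Zvec A \<Longrightarrow> w \<in> L ` Uvec A \<longleftrightarrow> (\<Sum>e\<in>zbasis A. z e * w e) = 0"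
begin

(* Rescaled by z, the coordinates along g 1, ..., g n determine the one along g 0 through the
   hyperplane equation (sum_u_coords); the basis vector g 0 becomes z_0 of T_n. *)
definition u_coords :: "('i \<Rightarrow> 'f) \<Rightarrow> nat \<Rightarrow> 'f" where
  "u_coords a = (\<lambda>i. if i \<in> {1..n} then z (g i) * L a (g i) else 0)"

definition z_coords :: "('j \<Rightarrow> 'f) \<Rightarrow> nat \<Rightarrow> 'f" where
  "z_coords w = (\<lambda>j. if j \<in> {0..n} then z (g j)^2 * w (g j) else 0)"

lemma g_in: "i \<in> {0..n} \<Longrightarrow> g i \<in> zbasis A"
  using bij_g by (auto simp: bij_betw_def)

lemma sum_reindex_g: "(\<Sum>e\<in>zbasis A. h e) = h (g 0) + (\<Sum>i=1..n. h (g i))"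
proof -
  have "(\<Sum>e\<in>zbasis A. h e) = (\<Sum>i=0..n. h (g i))"
    by (rule sum.reindex_bij_betw[OF bij_g, symmetric])
  also have "\<dots> = h (g 0) + (\<Sum>i=1..n. h (g i))"
    by (simp add: sum.atLeast_Suc_atMost)
  finally show ?thesis .
qed

lemma sum_u_coords:
  assumes "a \<in> Uvec A"
  shows "(\<Sum>i=1..n. u_coords a i) = - (z (g 0) * L a (g 0))"
proof -
  have "(\<Sum>e\<in>zbasis A. z e * L a e) = 0"
    using image_L L_range assms by blast
  moreover have "(\<Sum>i=1..n. u_coords a i) = (\<Sum>i=1..n. z (g i) * L a (g i))"
    by (simp add: u_coords_def)
  ultimately show ?thesis
    by (simp add: sum_reindex_g eq_neg_iff_add_eq_0 add.commute)
qed

lemma z_coords_nprod: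
  assumes "u \<in> Uvec A" "v \<in> Uvec A"
  shows "z_coords (nprod A u v) = nprod (T_alg n) (u_coords u) (u_coords v)"
proof
  fix j
  show "z_coords (nprod A u v) j = nprod (T_alg n) (u_coords u) (u_coords v) j"
  proof (cases "j = 0")
    case True
    then show ?thesis
      using assms sum_u_coords[OF assms(1)] sum_u_coords[OF assms(2)]
      by (simp add: nprod_T_alg z_coords_def nprod_eq power2_eq_square)
  next
    case False
    then show ?thesis
      using assms by (simp add: nprod_T_alg z_coords_def nprod_eq u_coords_def power2_eq_square)
  qed
qed

lemma linear_u_coords: "linear_on (Uvec A) u_coords"
  using linear_L by (auto simp: linear_on_def u_coords_def fun_eq_iff algebra_simps)

lemma linear_z_coords: "linear_on (Zvec A) z_coords"
  by (auto simp: linear_on_def z_coords_def fun_eq_iff algebra_simps)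

lemma inv_g:
  "e \<in> zbasis A \<Longrightarrow> inv_into {0..n} g e \<le> n"
  "e \<in> zbasis A \<Longrightarrow> g (inv_into {0..n} g e) = e"
  "i \<le> n \<Longrightarrow> inv_into {0..n} g (g i) = i"
  using bij_g inv_into_into[of _ g "{0..n}"] f_inv_into_f[of _ g "{0..n}"]
  by (auto simp: bij_betw_def)

lemma u_coords_onto: "u_coords ` Uvec A = coord_space {1..n}"
proof
  show "u_coords ` Uvec A \<subseteq> coord_space {1..n}"
    by (auto simp: u_coords_def coord_space_def)
  show "coord_space {1..n} \<subseteq> u_coords ` Uvec A"
  proof
    fix c :: "nat \<Rightarrow> 'f" assume c: "c \<in> coord_space {1..n}"
    define c0 :: "nat \<Rightarrow> 'f" where "c0 = c(0 := - (\<Sum>i=1..n. c i))"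
    define w where "w e = (if e \<in> zbasis A then c0 (inv_into {0..n} g e) / z e else 0)" for e
    have "w \<in> Zvec A"
      by (simp add: w_def Zvec_def)
    moreover have "(\<Sum>e\<in>zbasis A. z e * w e) = 0"
      using g_in z_nonzero by (simp add: sum_reindex_g w_def inv_g c0_def)
    ultimately obtain a where a: "a \<in> Uvec A" "L a = w"
      using image_L by blast
    have "u_coords a = c"
    proof
      fix i show "u_coords a i = c i"
        using c g_in[of i] z_nonzero[OF g_in[of i]] a(2)
        by (auto simp: u_coords_def w_def inv_g c0_def coord_space_def)
    qed
    then show "c \<in> u_coords ` Uvec A"
      using a(1) by blast
  qed
qed

lemma bij_z_coords: "bij_betw z_coords (Zvec A) (coord_space {0..n})"
proof -
  let ?inv = "\<lambda>c e. if e \<in> zbasis A then c (inv_into {0..n} g e) / z e ^ 2 else 0"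
  show ?thesis
  proof (rule bij_betw_byWitness[where f' = ?inv])
    show "\<forall>w\<in>Zvec A. ?inv (z_coords w) = w"
      using z_nonzero by (auto simp: fun_eq_iff z_coords_def inv_g Zvec_def)
    show "\<forall>c\<in>coord_space {0..n}. z_coords (?inv c) = c"
      using z_nonzero g_in by (auto simp: fun_eq_iff z_coords_def inv_g coord_space_def)
    show "z_coords ` Zvec A \<subseteq> coord_space {0..n}"
      by (auto simp: z_coords_def coord_space_def)
    show "?inv ` coord_space {0..n} \<subseteq> Zvec A"
      by (auto simp: Zvec_def)
  qed
qed

lemma u_coords_eq_0_iff:
  assumes a: "a \<in> Uvec A"
  shows "u_coords a = 0 \<longleftrightarrow> L a = 0"
proof
  assume u: "u_coords a = 0"
  have L_g: "L a (g i) = 0" if "i \<in> {0..n}" for i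
  proof (cases "i = 0")
    case True
    then show ?thesis
      using sum_u_coords[OF a] u z_nonzero[OF g_in[OF that]] by simp
  next
    case False
    then show ?thesis
      using fun_cong[OF u, of i] that z_nonzero[OF g_in[OF that]] by (simp add: u_coords_def)
  qed
  show "L a = 0"
  proof
    fix e
    show "L a e = 0 e"
    proof (cases "e \<in> zbasis A")
      case True
      then show ?thesis
        using L_g[of "inv_into {0..n} g e"] inv_g by simp
    next
      case False
      then show ?thesis
        using L_range[OF a] by (simp add: Zvec_def)
    qed
  qed
qed (simp add: u_coords_def fun_eq_iff)

lemma nalg_iso_T_alg:
  assumes inj: "inj_on L (Uvec A)"
  shows "nalg_iso A (T_alg n)"
proof -
  have "inj_on u_coords (Uvec A)"
  proof
    fix a b assume ab: "a \<in> Uvec A" "b \<in> Uvec A" and "u_coords a = u_coords b"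
    then have "u_coords (a - b) = 0"
      using linear_on_diff[OF linear_u_coords[unfolded Uvec_eq_coord_space]]
      by (simp add: Uvec_eq_coord_space)
    then have "L a - L b = 0"
      using ab u_coords_eq_0_iff[of "a - b"]
        linear_on_diff[OF linear_L[unfolded Uvec_eq_coord_space]]
      by (simp add: Uvec_eq_coord_space)
    then show "a = b"
      using inj ab by (simp add: inj_on_def)
  qed
  then have "bij_betw u_coords (Uvec A) (Uvec (T_alg n))"
    by (simp add: bij_betw_def u_coords_onto Uvec_T_alg)
  moreover have "bij_betw z_coords (Zvec A) (Zvec (T_alg n))"
    by (simp add: bij_z_coords Zvec_T_alg)
  ultimately show ?thesis
    unfolding nalg_iso_def using linear_u_coords linear_z_coords z_coords_nprod by blast
qed

lemma nalg_iso_sum_F0_T_alg: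
  assumes s: "s \<in> Uvec A" "L s = 0" "s x0 \<noteq> 0"
    and ker: "\<forall>a\<in>Uvec A. L a = 0 \<longrightarrow> a x0 = 0 \<longrightarrow> a = 0"
  shows "nalg_iso A (nalg_sum (F0 :: (unit, nat, 'f) nalg) (T_alg n))"
proof (rule nalg_iso_sum_F0[OF _ linear_u_coords _ linear_z_coords _ _ s(1) _ s(3)])
  show "finite (ubasis (T_alg n :: (nat, nat, 'f) nalg))"
    by (simp add: T_alg_def)
  show "u_coords ` Uvec A = Uvec (T_alg n)"
    by (simp add: u_coords_onto Uvec_T_alg)
  show "bij_betw z_coords (Zvec A) (Zvec (T_alg n))"
    by (simp add: bij_z_coords Zvec_T_alg)
  show "\<forall>u\<in>Uvec A. \<forall>v\<in>Uvec A. z_coords (nprod A u v) = nprod (T_alg n) (u_coords u) (u_coords v)"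
    by (simp add: z_coords_nprod)
  show "u_coords s = 0"
    using s u_coords_eq_0_iff by simp
  show "\<forall>a\<in>Uvec A. u_coords a = 0 \<longrightarrow> a x0 = 0 \<longrightarrow> a = 0"
    using ker u_coords_eq_0_iff by simp
qed

end

section \<open>The incidence map of a graph\<close>

definition incidence :: "'a set set \<Rightarrow> ('a \<Rightarrow> 'f::field) \<Rightarrow> ('a set \<Rightarrow> 'f)" where
  "incidence E a = (\<lambda>e. if e \<in> E then \<Sum>x\<in>e. a x else 0)"

lemma incidence_diff: "incidence E (a - b) = incidence E a - incidence E b"
  by (simp add: incidence_def fun_eq_iff sum_subtractf)

lemma incidence_scale: "incidence E (scale_fun c a) = scale_fun c (incidence E a)"
  by (simp add: incidence_def fun_eq_iff sum_distrib_left scale_fun_apply)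

lemma linear_on_incidence: "linear_on S (incidence E)"
  by (simp add: linear_on_def incidence_def fun_eq_iff sum.distrib sum_distrib_left)

lemma incidence_in_coord_space: "incidence E a \<in> coord_space E"
  by (simp add: incidence_def coord_space_def)

lemma incidence_outside: "e \<notin> E \<Longrightarrow> incidence E a e = 0"
  by (simp add: incidence_def)

lemma incidence_edge: "x \<noteq> y \<Longrightarrow> {x, y} \<in> E \<Longrightarrow> incidence E a {x, y} = a x + a y"
  by (simp add: incidence_def)

lemma nprod_NG:
  assumes "simple_graph V E"
  shows "nprod (NG V E :: ('a, 'a set, 'f::field) nalg) u v =
    (\<lambda>e. incidence E u e * incidence E v e)"
proof
  fix e
  show "nprod (NG V E :: ('a, 'a set, 'f) nalg) u v e = incidence E u e * incidence E v e"
  proof (cases "e \<in> E")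
    case True
    then have e: "card e = 2" "e \<subseteq> V" and V: "finite V"
      using assms by (auto simp: simple_graph_def)
    have incident: "(if x = y then x \<in> e else e = {x, y}) \<longleftrightarrow> x \<in> e \<and> y \<in> e" for x y
      using e(1) by (auto simp: card_2_iff)
    have "nprod (NG V E :: ('a, 'a set, 'f) nalg) u v e
        = (\<Sum>x\<in>V. \<Sum>y\<in>V. if x \<in> e \<and> y \<in> e then u x * v y else 0)"
      using True unfolding nprod_def NG_def
      by (simp, intro sum.cong refl) (use incident in auto)
    also have "\<dots> = (\<Sum>x\<in>V. if x \<in> e then \<Sum>y\<in>V. if y \<in> e then u x * v y else 0 else 0)"
      by (intro sum.cong) auto
    also have "\<dots> = (\<Sum>x\<in>e. \<Sum>y\<in>e. u x * v y)"
      using V e(2) by (simp add: Int_absorb1 flip: sum.inter_restrict)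
    also have "\<dots> = incidence E u e * incidence E v e"
      using True by (simp add: incidence_def sum_product)
    finally show ?thesis .
  qed (simp add: nprod_def NG_def incidence_def)
qed

lemma adj_sym: "adj E x y \<Longrightarrow> adj E y x"
  by (auto simp: adj_def insert_commute)

lemma four_le_if_Suc_le_choose_two:
  assumes "n + 1 \<le> n choose 2"
  shows "4 \<le> n"
proof (rule ccontr)
  assume "\<not> 4 \<le> n"
  then consider "n = 0" | "n = 1" | "n = 2" | "n = 3"
    by linarith
  then show False
    using assms by cases (simp_all add: numeral_eq_Suc)
qed

locale fin_simple_graph =
  fixes V :: "'a set" and E :: "'a set set"
  assumes simple: "simple_graph V E"
begin

lemma finite_V: "finite V"
  using simple by (simp add: simple_graph_def)

lemma edge: "e \<in> E \<Longrightarrow> e \<subseteq> V \<and> card e = 2"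
  using simple by (simp add: simple_graph_def)

lemma finite_edge: "e \<in> E \<Longrightarrow> finite e"
  using edge card.infinite by force

lemma finite_E: "finite E"
  using finite_V edge by (meson Pow_iff finite_Pow_iff finite_subset subsetI)

lemma adj_edge: "adj E x y \<Longrightarrow> x \<in> V \<and> y \<in> V \<and> {x, y} \<in> E \<and> x \<noteq> y"
  using edge by (auto simp: adj_def)

lemma degree_eq: "card {y. adj E x y} = card {e\<in>E. x \<in> e}"
proof (rule bij_betw_same_card[of "\<lambda>y. {x, y}"], rule bij_betw_imageI)
  show "inj_on (\<lambda>y. {x, y}) {y. adj E x y}"
    by (rule inj_onI) (auto simp: adj_def doubleton_eq_iff)
  have "e \<in> (\<lambda>y. {x, y}) ` {y. adj E x y}" if e: "e \<in> E" "x \<in> e" for e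
  proof -
    obtain u v where "e = {u, v}" "u \<noteq> v"
      using edge[OF e(1)] by (auto simp: card_2_iff)
    then have "e = {x, if x = u then v else u}" "x \<noteq> (if x = u then v else u)"
      using e(2) by auto
    then show ?thesis
      using e(1) by (intro image_eqI[of _ _ "if x = u then v else u"]) (auto simp: adj_def)
  qed
  then show "(\<lambda>y. {x, y}) ` {y. adj E x y} = {e\<in>E. x \<in> e}"
    by (auto simp: adj_def)
qed

lemma degree_sum: "(\<Sum>x\<in>V. card {e\<in>E. x \<in> e}) = 2 * card E"
proof -
  have "(\<Sum>x\<in>V. card {e\<in>E. x \<in> e}) = (\<Sum>x\<in>V. \<Sum>e\<in>E. if x \<in> e then 1 else 0)"
    using finite_E by (simp add: sum.inter_filter[symmetric])
  also have "\<dots> = (\<Sum>e\<in>E. \<Sum>x\<in>V. if x \<in> e then 1 else 0)"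
    by (rule sum.swap)
  also have "\<dots> = (\<Sum>e\<in>E. card {x\<in>V. x \<in> e})"
    using finite_V by (simp add: sum.inter_filter[symmetric])
  also have "\<dots> = (\<Sum>e\<in>E. 2)"
  proof (rule sum.cong [OF refl])
    fix e assume "e \<in> E"
    then have "{x\<in>V. x \<in> e} = e" and "card e = 2"
      using edge by auto
    then show "card {x\<in>V. x \<in> e} = 2"
      by simp
  qed
  finally show ?thesis
    by simp
qed

lemma card_E_le: "card E \<le> card V choose 2"
proof -
  have "E \<subseteq> {e. e \<subseteq> V \<and> card e = 2}"
    using edge by blast
  moreover have "finite {e. e \<subseteq> V \<and> card e = 2}"
    using finite_V by simp
  ultimately have "card E \<le> card {e. e \<subseteq> V \<and> card e = 2}"
    by (rule card_mono[rotated])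
  then show ?thesis
    by (simp add: n_subsets[OF finite_V])
qed

lemma incidence_unit_vec: "incidence E (unit_vec x) e = (if e \<in> E \<and> x \<in> e then 1 else 0)"
  by (simp add: incidence_def unit_vec_def finite_edge sum.delta')

lemma kernel_alternates: "incidence E a = 0 \<Longrightarrow> adj E x y \<Longrightarrow> a y = - a x"
  using incidence_edge[of x y E a] adj_edge by (metis add_eq_0_iff add.commute zero_fun_def)

lemma kernel_vanishing_at_vertex:
  assumes conn: "connected_graph V E" and a: "incidence E a = 0" "a \<in> coord_space V"
    and x: "x \<in> V" "a x = 0"
  shows "a = 0"
proof
  fix y
  show "a y = 0 y"
  proof (cases "y \<in> V")
    case True
    then have "(adj E)\<^sup>*\<^sup>* x y"
      using conn x by (simp add: connected_graph_def)
    then show ?thesis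
      by (induction rule: rtranclp_induct) (use x kernel_alternates[OF a(1)] in auto)
  qed (use a in \<open>simp add: coord_space_def\<close>)
qed

lemma incidence_residual:
  fixes v :: "'a set \<Rightarrow> 'a \<Rightarrow> 'f::field" and w :: "'a set \<Rightarrow> 'f"
  assumes e0: "e0 \<in> E" and v_V: "\<And>e. e \<in> E - {e0} \<Longrightarrow> v e \<in> coord_space V"
    and v_e: "\<And>e. e \<in> E - {e0} \<Longrightarrow> incidence E (v e) e = 1"
    and v_other: "\<And>e e'. e \<in> E - {e0} \<Longrightarrow> e' \<in> E - {e, e0} \<Longrightarrow> incidence E (v e) e' = 0"
    and w: "w \<in> coord_space E"
  shows "w - incidence E (\<Sum>e\<in>E - {e0}. scale_fun (w e) (v e)) =
    (\<lambda>e'. if e' = e0 then w e0 - (\<Sum>e\<in>E - {e0}. w e * incidence E (v e) e0) else 0)"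
proof
  fix e'
  have "incidence E (\<Sum>e\<in>E - {e0}. scale_fun (w e) (v e)) =
      (\<Sum>e\<in>E - {e0}. scale_fun (w e) (incidence E (v e)))"
    by (rule linear_on_sum[OF linear_on_incidence v_V])
  then have image: "incidence E (\<Sum>e\<in>E - {e0}. scale_fun (w e) (v e)) e' =
      (\<Sum>e\<in>E - {e0}. w e * incidence E (v e) e')"
    by (simp add: sum_fun_apply scale_fun_apply)
  consider "e' \<in> E - {e0}" | "e' = e0" | "e' \<notin> E"
    by blast
  then show "(w - incidence E (\<Sum>e\<in>E - {e0}. scale_fun (w e) (v e))) e' =
    (if e' = e0 then w e0 - (\<Sum>e\<in>E - {e0}. w e * incidence E (v e) e0) else 0)"
  proof cases
    case 1
    have "(\<Sum>e\<in>E - {e0}. w e * incidence E (v e) e') = (\<Sum>e\<in>E - {e0}. if e = e' then w e else 0)"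
      using 1 v_e v_other by (intro sum.cong) auto
    then show ?thesis
      using 1 image finite_E by simp
  next
    case 2
    then show ?thesis
      using image by simp
  next
    case 3
    then show ?thesis
      using e0 w incidence_outside[of e' E] by (auto simp: coord_space_def)
  qed
qed
end

section \<open>Connected 2-regular graphs are cycles\<close>

fun nonbacktracking_walk :: "'a set set \<Rightarrow> 'a \<Rightarrow> 'a \<Rightarrow> nat \<Rightarrow> 'a" where
  "nonbacktracking_walk E a b 0 = a"
| "nonbacktracking_walk E a b (Suc 0) = b"
| "nonbacktracking_walk E a b (Suc (Suc n)) =
     (SOME y. adj E (nonbacktracking_walk E a b (Suc n)) y \<and> y \<noteq> nonbacktracking_walk E a b n)"

declare nonbacktracking_walk.simps(3) [simp del]

locale two_regular_walk = fin_simple_graph +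
  fixes a b :: 'a
  assumes connected: "connected_graph V E"
    and two_regular: "x \<in> V \<Longrightarrow> card {y. adj E x y} = 2"
    and start: "adj E a b"
begin

abbreviation walk :: "nat \<Rightarrow> 'a" where
  "walk \<equiv> nonbacktracking_walk E a b"

lemma neighbours_two:
  assumes "adj E x y" "adj E x y'" "y \<noteq> y'" "adj E x t"
  shows "t = y \<or> t = y'"
proof -
  have "card {y. adj E x y} = 2"
    using assms(1) adj_edge two_regular by blast
  then obtain p q where pq: "{y. adj E x y} = {p, q}"
    by (auto simp: card_2_iff)
  have "y \<in> {p, q}" "y' \<in> {p, q}" "t \<in> {p, q}"
    using assms unfolding pq[symmetric] by simp_all
  then show ?thesis
    using assms(3) by auto
qed

lemma other_neighbour:
  assumes "adj E x y"
  shows "\<exists>y'. adj E x y' \<and> y' \<noteq> y"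
proof -
  have "card {y. adj E x y} = 2"
    using assms adj_edge two_regular by blast
  then obtain p q where "{y. adj E x y} = {p, q}" "p \<noteq> q"
    by (auto simp: card_2_iff)
  then have "adj E x p" "adj E x q" "p \<noteq> q"
    by auto
  then show ?thesis
    by metis
qed

lemma walk_continues:
  assumes "adj E (walk n) (walk (Suc n))"
  shows "adj E (walk (Suc n)) (walk (Suc (Suc n))) \<and> walk (Suc (Suc n)) \<noteq> walk n"
proof -
  have "\<exists>y. adj E (walk (Suc n)) y \<and> y \<noteq> walk n"
    using other_neighbour[OF adj_sym[OF assms]] .
  then show ?thesis
    unfolding nonbacktracking_walk.simps(3) by (rule someI_ex)
qed

lemma walk_adj: "adj E (walk n) (walk (Suc n))"
proof (induction n)
  case 0
  then show ?case
    using start by simp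
next
  case (Suc n)
  then show ?case
    using walk_continues by blast
qed

lemma walk_no_backtrack: "walk (Suc (Suc n)) \<noteq> walk n"
  using walk_continues[OF walk_adj] by blast

lemma walk_in_V: "walk n \<in> V"
  using adj_edge[OF walk_adj] by blast

lemma walk_neighbours: "adj E (walk (Suc n)) t \<Longrightarrow> t = walk n \<or> t = walk (Suc (Suc n))"
  using neighbours_two[OF adj_sym[OF walk_adj] walk_adj walk_no_backtrack[symmetric]] .

definition period :: nat where
  "period = (LEAST m. \<exists>j<m. walk j = walk m)"

lemma walk_repeats: "\<exists>j<period. walk j = walk period"
proof -
  have "\<not> inj_on walk {0..card V}"
  proof
    assume "inj_on walk {0..card V}"
    moreover have "walk ` {0..card V} \<subseteq> V"
      using walk_in_V by blast
    ultimately show False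
      using card_inj_on_le[of walk "{0..card V}" V] finite_V by simp
  qed
  then have "\<exists>m. \<exists>j<m. walk j = walk m"
    unfolding inj_on_def by (metis linorder_neqE_nat)
  then show ?thesis
    unfolding period_def by (rule LeastI_ex)
qed

lemma walk_distinct: "i < k \<Longrightarrow> k < period \<Longrightarrow> walk i \<noteq> walk k"
  using not_less_Least[of k "\<lambda>m. \<exists>j<m. walk j = walk m"] unfolding period_def by blast

(* A repetition at a vertex other than the start would give that vertex a third neighbour. *)
lemma walk_period: "walk period = walk 0"
proof -
  obtain j where j: "j < period" "walk j = walk period"
    using walk_repeats by blast
  show ?thesis
  proof (cases j)
    case (Suc i)
    obtain p where p: "period = Suc p"
      using j(1) by (cases period) auto
    have "adj E (walk (Suc i)) (walk p)"
      using adj_sym[OF walk_adj[of p]] j(2) Suc p by simp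
    then have neighbour: "walk p = walk i \<or> walk p = walk (Suc (Suc i))"
      by (rule walk_neighbours)
    have "i < p"
      using j(1) Suc p by simp
    then consider "Suc (Suc i) < p" | "Suc (Suc i) = p" | "Suc i = p"
      by linarith
    then show ?thesis
    proof cases
      case 1
      then show ?thesis
        using neighbour walk_distinct[of i p] walk_distinct[OF 1] p by auto
    next
      case 2
      then show ?thesis
        using neighbour walk_distinct[of i p] walk_no_backtrack[of "Suc i"] j(2) Suc p
        by auto
    next
      case 3
      then show ?thesis
        using neighbour walk_distinct[of i p] adj_edge[OF walk_adj[of p]] j(2) Suc p
        by auto
    qed
  qed (use j in simp)
qed

lemma period_ge_3: "3 \<le> period"
proof -
  have "period \<noteq> 0"
    using walk_repeats by auto
  moreover have "period \<noteq> 1"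
    using walk_period adj_edge[OF walk_adj[of 0]] by auto
  moreover have "period \<noteq> 2"
    using walk_period walk_no_backtrack[of 0] by (auto simp: numeral_2_eq_2)
  ultimately show ?thesis
    by linarith
qed

lemma walk_Suc_mod:
  assumes "i < period"
  shows "walk (Suc i mod period) = walk (Suc i)"
proof (cases "Suc i = period")
  case True
  then show ?thesis
    using walk_period by simp
qed (use assms in simp)

lemma cycle_edge:
  assumes "i < period" "adj E (walk i) t"
  shows "\<exists>k<period. {walk i, t} = {walk k, walk (Suc k mod period)}"
proof (cases i)
  case 0
  obtain p where p: "period = Suc p"
    using period_ge_3 by (cases period) auto
  have "adj E (walk 0) (walk p)"
    using adj_sym[OF walk_adj[of p]] walk_period p by simp
  moreover have "walk (Suc 0) \<noteq> walk p"
    using walk_distinct[of 1 p] period_ge_3 p by simp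
  ultimately have "t = walk (Suc 0) \<or> t = walk p"
    using neighbours_two[OF walk_adj[of 0]] assms(2) 0 by blast
  then show ?thesis
    using 0 p period_ge_3 walk_Suc_mod[of p] walk_Suc_mod[of 0] walk_period
    by (metis insert_commute lessI zero_less_Suc)
next
  case (Suc j)
  then have "t = walk j \<or> t = walk (Suc (Suc j))"
    using walk_neighbours assms(2) by simp
  then show ?thesis
    using Suc assms(1) walk_Suc_mod[of j] walk_Suc_mod[of i]
    by (metis Suc_lessD insert_commute)
qed

lemma V_eq_walk: "V = walk ` {0..<period}"
proof
  show "walk ` {0..<period} \<subseteq> V"
    using walk_in_V by blast
  show "V \<subseteq> walk ` {0..<period}"
  proof
    fix y assume "y \<in> V"
    then have "(adj E)\<^sup>*\<^sup>* (walk 0) y"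
      using connected walk_in_V[of 0] by (simp add: connected_graph_def)
    then show "y \<in> walk ` {0..<period}"
    proof (induction rule: rtranclp_induct)
      case base
      show ?case
        using period_ge_3 by (intro imageI) simp
    next
      case (step x t)
      then obtain i where "i < period" "x = walk i"
        by auto
      then obtain k where "k < period" "t \<in> {walk k, walk (Suc k mod period)}"
        using cycle_edge step(2) by (metis insertI2 singletonI)
      then show ?case
        using period_ge_3 by (auto intro: mod_less_divisor)
    qed
  qed
qed

lemma inj_on_walk: "inj_on walk {0..<period}"
  by (rule inj_onI) (metis atLeastLessThan_iff linorder_neqE_nat walk_distinct)

lemma card_V_eq_period: "card V = period"
  by (simp add: V_eq_walk card_image inj_on_walk)

lemma E_eq_walk_edges: "E = {{walk i, walk (Suc i mod card V)} | i. i < card V}"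
proof
  show "E \<subseteq> {{walk i, walk (Suc i mod card V)} | i. i < card V}"
  proof
    fix e assume e: "e \<in> E"
    then obtain x y where xy: "e = {x, y}" "x \<noteq> y"
      using edge[OF e] card_2_iff by metis
    then have "adj E x y" and "x \<in> V"
      using e edge by (auto simp: adj_def)
    then obtain i where "i < period" "x = walk i"
      using V_eq_walk by auto
    then show "e \<in> {{walk i, walk (Suc i mod card V)} | i. i < card V}"
      using cycle_edge \<open>adj E x y\<close> xy card_V_eq_period by fastforce
  qed
  show "{{walk i, walk (Suc i mod card V)} | i. i < card V} \<subseteq> E"
    using walk_adj walk_Suc_mod card_V_eq_period by (auto simp: adj_def)
qed

lemma is_cycle: "is_cycle V E"
  unfolding is_cycle_def
  using card_V_eq_period period_ge_3 E_eq_walk_edges V_eq_walk inj_on_walk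
  by (auto simp: bij_betw_def)

end

lemma (in fin_simple_graph) connected_two_regular_is_cycle:
  assumes "connected_graph V E" "V \<noteq> {}" "\<And>x. x \<in> V \<Longrightarrow> card {y. adj E x y} = 2"
  shows "is_cycle V E"
proof -
  obtain x where x: "x \<in> V"
    using assms(2) by blast
  then have "{y. adj E x y} \<noteq> {}"
    using assms(3)[OF x] by (metis card.empty zero_neq_numeral)
  then obtain y where "adj E x y"
    by blast
  then interpret two_regular_walk V E x y
    using assms by unfold_locales
  show ?thesis
    by (rule is_cycle)
qed

lemma even_cycle_if_alternating:
  fixes s :: "'a \<Rightarrow> 'f::field"
  assumes cycle: "is_cycle V E" and char: "(2::'f) \<noteq> 0"
    and kernel: "incidence E s = 0" and nonzero: "\<forall>x\<in>V. s x \<noteq> 0"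
  shows "even (card V)"
proof (rule ccontr)
  assume odd: "odd (card V)"
  let ?p = "card V"
  obtain f where f: "bij_betw f {0..<?p} V" and E: "E = {{f i, f (Suc i mod ?p)} | i. i < ?p}"
    and p: "3 \<le> ?p"
    using cycle by (auto simp: is_cycle_def)
  have step: "s (f (Suc i mod ?p)) = - s (f i)" if "i < ?p" for i
  proof -
    have next_ne: "Suc i mod ?p \<noteq> i" and next_lt: "Suc i mod ?p < ?p"
      using that p by (cases "Suc i = ?p"; simp)+
    have "inj_on f {0..<?p}"
      using f by (simp add: bij_betw_def)
    then have "f (Suc i mod ?p) \<noteq> f i"
      using next_ne next_lt that by (simp add: inj_on_eq_iff)
    moreover have "{f i, f (Suc i mod ?p)} \<in> E"
      using E that by blast
    ultimately have "incidence E s {f i, f (Suc i mod ?p)} = s (f i) + s (f (Suc i mod ?p))"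
      by (intro incidence_edge) auto
    then show ?thesis
      using kernel by (simp add: eq_neg_iff_add_eq_0 add.commute)
  qed
  have alternating: "s (f i) = (-1) ^ i * s (f 0)" if "i < ?p" for i
    using that
  proof (induction i)
    case (Suc i)
    then show ?case
      using step[of i] by simp
  qed simp
  have "s (f 0) = - s (f (?p - 1))"
    using step[of "?p - 1"] p by simp
  also have "\<dots> = - s (f 0)"
    using alternating[of "?p - 1"] odd p by simp
  finally have "2 * s (f 0) = 0"
    by simp
  moreover have "f 0 \<in> V"
    using f p by (auto simp: bij_betw_def)
  ultimately show False
    using char nonzero by simp
qed

section \<open>Graphs whose pairs of edges are supports of squares\<close>

locale square_pairs_graph = fin_simple_graph V E
  for V :: "'a set" and E :: "'a set set" and field :: "'f::field itself" +
  assumes connected: "connected_graph V E"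
    and pairs: "\<forall>e1\<in>E. \<forall>e2\<in>E. e1 \<noteq> e2 \<longrightarrow>
      (\<exists>u \<in> Uvec (NG V E :: ('a, 'a set, 'f) nalg).
         zsupport E (nprod (NG V E :: ('a, 'a set, 'f) nalg) u u) = {e1, e2})"
    and not_edge_square: "\<not> edge_square V E TYPE('f)"
begin

abbreviation L :: "('a \<Rightarrow> 'f) \<Rightarrow> 'a set \<Rightarrow> 'f" where
  "L \<equiv> incidence E"

lemma Uvec_NG: "Uvec (NG V E :: ('a, 'a set, 'f) nalg) = coord_space V"
  by (simp add: Uvec_eq_coord_space NG_def)

lemma Zvec_NG: "Zvec (NG V E :: ('a, 'a set, 'f) nalg) = coord_space E"
  by (simp add: Zvec_eq_coord_space NG_def)

lemma ubasis_NG: "ubasis (NG V E :: ('a, 'a set, 'f) nalg) = V"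
  by (simp add: NG_def)

lemma zbasis_NG: "zbasis (NG V E :: ('a, 'a set, 'f) nalg) = E"
  by (simp add: NG_def)

lemma non_square_edge:
  obtains e0 where "e0 \<in> E"
    and "\<And>a. a \<in> coord_space V \<Longrightarrow> \<forall>e\<in>E - {e0}. L a e = 0 \<Longrightarrow> L a e0 = 0"
proof -
  obtain e0 where e0: "e0 \<in> E" and "\<not> (\<exists>u \<in> Uvec (NG V E :: ('a, 'a set, 'f) nalg).
      nprod (NG V E) u u = (\<lambda>e. if e = e0 then (1::'f) else 0))"
    using not_edge_square unfolding edge_square_def by blast
  then have no_root: "\<forall>u \<in> coord_space V. (\<lambda>e. L u e * L u e) \<noteq> (\<lambda>e. if e = e0 then 1 else 0)"
    by (simp add: Uvec_NG nprod_NG[OF simple])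
  have "L a e0 = 0" if a: "a \<in> coord_space V" and off: "\<forall>e\<in>E - {e0}. L a e = 0" for a
  proof (rule ccontr)
    assume nonzero: "L a e0 \<noteq> 0"
    let ?u = "scale_fun (1 / L a e0) a"
    have "L ?u e = (if e = e0 then 1 else 0)" for e
      using off nonzero incidence_outside[of e E a]
      by (cases "e = e0"; cases "e \<in> E") (simp_all add: incidence_scale scale_fun_apply)
    then have "(\<lambda>e. L ?u e * L ?u e) = (\<lambda>e. if e = e0 then 1 else 0)"
      by (simp add: fun_eq_iff)
    then show False
      using no_root a by (meson coord_space_scale)
  qed
  then show thesis
    using that e0 by blast
qed

lemma normalized_pair_square:
  assumes "e0 \<in> E" "e \<in> E" "e \<noteq> e0"
  shows "\<exists>v\<in>coord_space V. L v e = 1 \<and> L v e0 \<noteq> 0 \<and> (\<forall>e'\<in>E - {e, e0}. L v e' = 0)"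
proof -
  obtain u where "u \<in> Uvec (NG V E :: ('a, 'a set, 'f) nalg)"
    and "zsupport E (nprod (NG V E :: ('a, 'a set, 'f) nalg) u u) = {e0, e}"
    using pairs[rule_format, OF assms(1,2)] assms(3) by auto
  then have u: "u \<in> coord_space V" and support: "{e'\<in>E. L u e' \<noteq> 0} = {e0, e}"
    by (simp_all add: Uvec_NG nprod_NG[OF simple] zsupport_def)
  have "e \<in> {e'\<in>E. L u e' \<noteq> 0}" "e0 \<in> {e'\<in>E. L u e' \<noteq> 0}"
    unfolding support by simp_all
  moreover have "L u e' = 0" if "e' \<in> E - {e, e0}" for e'
    using that support by auto
  ultimately have "L u e \<noteq> 0" "L u e0 \<noteq> 0" "\<forall>e'\<in>E - {e, e0}. L u e' = 0"
    by simp_all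
  then show ?thesis
    using u by (intro bexI[of _ "scale_fun (1 / L u e) u"])
      (simp_all add: incidence_scale scale_fun_apply)
qed

(* L (v e) is the unit vector at e plus a nonzero multiple of the one at e0, so every w differs
   from an element of the image by a multiple of the unit vector at e0; that multiple is in the
   image only if it is zero, as e0 is not a square. *)
lemma incidence_image_hyperplane:
  obtains z :: "'a set \<Rightarrow> 'f" where "\<And>e. e \<in> E \<Longrightarrow> z e \<noteq> 0"
    and "\<And>w. w \<in> coord_space E \<Longrightarrow> w \<in> L ` coord_space V \<longleftrightarrow> (\<Sum>e\<in>E. z e * w e) = 0"
proof -
  obtain e0 where e0: "e0 \<in> E"
    and e0_not_square: "\<And>a. a \<in> coord_space V \<Longrightarrow> \<forall>e\<in>E - {e0}. L a e = 0 \<Longrightarrow> L a e0 = 0"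
    using non_square_edge by blast
  have "\<forall>e\<in>E - {e0}. \<exists>v. v \<in> coord_space V \<and> L v e = 1 \<and> L v e0 \<noteq> 0 \<and> (\<forall>e'\<in>E - {e, e0}. L v e' = 0)"
    using normalized_pair_square[OF e0] by blast
  then obtain v where v_V: "\<And>e. e \<in> E - {e0} \<Longrightarrow> v e \<in> coord_space V"
    and v_e: "\<And>e. e \<in> E - {e0} \<Longrightarrow> L (v e) e = 1"
    and v_e0: "\<And>e. e \<in> E - {e0} \<Longrightarrow> L (v e) e0 \<noteq> 0"
    and v_other: "\<And>e e'. e \<in> E - {e0} \<Longrightarrow> e' \<in> E - {e, e0} \<Longrightarrow> L (v e) e' = 0"
    by metis
  define z where "z e = (if e = e0 then 1 else - L (v e) e0)" for e
  define lift where "lift w = (\<Sum>e\<in>E - {e0}. scale_fun (w e) (v e))" for w :: "'a set \<Rightarrow> 'f"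
  have lift_V: "lift w \<in> coord_space V" for w
    unfolding lift_def by (intro coord_space_sum coord_space_scale v_V)
  have residual: "w - L (lift w) = (\<lambda>e'. if e' = e0 then \<Sum>e\<in>E. z e * w e else 0)"
    if w: "w \<in> coord_space E" for w
  proof -
    have "(\<Sum>e\<in>E. z e * w e) = w e0 - (\<Sum>e\<in>E - {e0}. w e * L (v e) e0)"
      using finite_E e0 by (simp add: sum.remove[of _ e0] z_def sum_negf mult.commute)
    then show ?thesis
      unfolding lift_def by (simp only: incidence_residual[OF e0 v_V v_e v_other w])
  qed
  show thesis
  proof (rule that)
    show "z e \<noteq> 0" if "e \<in> E" for e
      using v_e0 that by (simp add: z_def)
    show "w \<in> L ` coord_space V \<longleftrightarrow> (\<Sum>e\<in>E. z e * w e) = 0" if w: "w \<in> coord_space E" for w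
    proof
      assume "w \<in> L ` coord_space V"
      then obtain a where a: "a \<in> coord_space V" "w = L a"
        by blast
      have "\<forall>e\<in>E - {e0}. L (a - lift w) e = 0"
        using fun_cong[OF residual[OF w]] a(2) by (simp add: incidence_diff)
      then have "L (a - lift w) e0 = 0"
        using e0_not_square a(1) lift_V by simp
      then show "(\<Sum>e\<in>E. z e * w e) = 0"
        using fun_cong[OF residual[OF w], of e0] a(2) by (simp add: incidence_diff)
    next
      assume "(\<Sum>e\<in>E. z e * w e) = 0"
      then have "w - L (lift w) = 0"
        using residual[OF w] by (simp add: fun_eq_iff)
      then show "w \<in> L ` coord_space V"
        using lift_V by (metis eq_iff_diff_eq_0 image_eqI)
    qed
  qed
qed

end

context square_pairs_graph
begin

lemma E_nonempty: "E \<noteq> {}"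
  using non_square_edge by blast

lemma hyperplane_image_NG:
  obtains z g where "hyperplane_image (NG V E :: ('a, 'a set, 'f) nalg) L z g (card E - 1)"
proof -
  obtain z where z: "\<And>e. e \<in> E \<Longrightarrow> z e \<noteq> 0"
    and image: "\<And>w. w \<in> coord_space E \<Longrightarrow> w \<in> L ` coord_space V \<longleftrightarrow> (\<Sum>e\<in>E. z e * w e) = 0"
    using incidence_image_hyperplane by blast
  obtain g where "bij_betw g {0..<card E} E"
    using ex_bij_betw_nat_finite[OF finite_E] by blast
  moreover have "0 < card E"
    using E_nonempty finite_E by (simp add: card_gt_0_iff)
  then have "{0..<card E} = {0..card E - 1}"
    by auto
  ultimately have "hyperplane_image (NG V E :: ('a, 'a set, 'f) nalg) L z g (card E - 1)"
    using z image by unfold_locales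
      (simp_all add: Uvec_NG Zvec_NG ubasis_NG zbasis_NG nprod_NG[OF simple]
        linear_on_incidence incidence_in_coord_space)
  then show thesis
    by (rule that)
qed

lemma has_neighbour:
  assumes "x \<in> V"
  obtains y where "adj E x y"
proof -
  obtain e where "e \<in> E"
    using E_nonempty by blast
  then obtain u v where "{u, v} \<subseteq> V" "u \<noteq> v"
    using edge card_2_iff by (metis (no_types, lifting))
  then obtain y where "y \<in> V" "y \<noteq> x"
    by blast
  then have "(adj E)\<^sup>*\<^sup>* x y"
    using connected assms by (simp add: connected_graph_def)
  then show thesis
    using \<open>y \<noteq> x\<close> that by (cases rule: converse_rtranclpE) auto
qed

lemma degree_ge_2:
  assumes x: "x \<in> V"
  shows "2 \<le> card {e\<in>E. x \<in> e}"
proof -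
  obtain z g where "hyperplane_image (NG V E :: ('a, 'a set, 'f) nalg) L z g (card E - 1)"
    by (rule hyperplane_image_NG)
  then interpret H: hyperplane_image "NG V E :: ('a, 'a set, 'f) nalg" L z g "card E - 1" .
  have u: "unit_vec x \<in> Uvec (NG V E :: ('a, 'a set, 'f) nalg)"
    using x by (simp add: Uvec_NG unit_vec_in_coord_space)
  then have "(\<Sum>e\<in>E. z e * L (unit_vec x) e) = 0"
    using H.image_L[OF H.L_range[OF u]] by (simp add: zbasis_NG)
  then have cancel: "(\<Sum>e\<in>{e\<in>E. x \<in> e}. z e) = 0"
    using finite_E
    by (simp add: incidence_unit_vec sum.inter_filter if_distrib[of "\<lambda>t. _ * t"] cong: if_cong)
  obtain y where "adj E x y"
    using has_neighbour[OF x] .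
  then have "{x, y} \<in> {e\<in>E. x \<in> e}"
    using adj_edge by blast
  then have "card {e\<in>E. x \<in> e} \<noteq> 0"
    using finite_E by (auto simp: card_eq_0_iff)
  moreover have "card {e\<in>E. x \<in> e} \<noteq> 1"
  proof
    assume "card {e\<in>E. x \<in> e} = 1"
    then obtain e where e: "{e\<in>E. x \<in> e} = {e}"
      by (rule card_1_singletonE)
    then have "e \<in> E"
      by blast
    then show False
      using e cancel H.z_nonzero[of e] by (simp add: zbasis_NG)
  qed
  ultimately show ?thesis
    by linarith
qed

lemma two_regular_if_card_E_eq_card_V:
  assumes "card E = card V" "x \<in> V"
  shows "card {y. adj E x y} = 2"
proof -
  have "(\<Sum>x\<in>V. card {e\<in>E. x \<in> e} - 2) = (\<Sum>x\<in>V. card {e\<in>E. x \<in> e}) - (\<Sum>x\<in>V. 2)"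
    using degree_ge_2 by (rule sum_subtractf_nat)
  also have "\<dots> = 0"
    using degree_sum assms(1) by simp
  finally have "card {e\<in>E. x \<in> e} - 2 = 0"
    using finite_V assms(2) by simp
  then show ?thesis
    using degree_ge_2[OF assms(2)] degree_eq by simp
qed

lemma card_E_pos: "0 < card E"
  using E_nonempty finite_E by (simp add: card_gt_0_iff)

lemma incidence_injective_case:
  assumes inj: "inj_on L (coord_space V)"
  shows "card E = card V + 1 \<and> 4 \<le> card V \<and>
    nalg_iso (NG V E :: ('a, 'a set, 'f) nalg) (T_alg (card V) :: (nat, nat, 'f) nalg)"
proof -
  obtain z g where "hyperplane_image (NG V E :: ('a, 'a set, 'f) nalg) L z g (card E - 1)"
    by (rule hyperplane_image_NG)
  then interpret H: hyperplane_image "NG V E :: ('a, 'a set, 'f) nalg" L z g "card E - 1" .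
  have iso: "nalg_iso (NG V E :: ('a, 'a set, 'f) nalg) (T_alg (card E - 1) :: (nat, nat, 'f) nalg)"
    using H.nalg_iso_T_alg inj by (simp add: Uvec_NG)
  then have "card V = card E - 1"
    using nalg_iso_card_ubasis[OF iso] finite_V by (simp add: ubasis_NG ubasis_T_alg)
  then have card: "card E = card V + 1"
    using card_E_pos by simp
  then have "4 \<le> card V"
    using card_E_le by (intro four_le_if_Suc_le_choose_two) simp
  then show ?thesis
    using card iso by simp
qed

lemma incidence_kernel_case:
  assumes char: "(2::'f) \<noteq> 0"
    and s: "s \<in> coord_space V" "s \<noteq> 0" "L s = (0 :: 'a set \<Rightarrow> 'f)"
  shows "card E = card V \<and> is_even_cycle V E \<and> 4 \<le> card V \<and>
    nalg_iso (NG V E :: ('a, 'a set, 'f) nalg)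
      (nalg_sum (F0 :: (unit, nat, 'f) nalg) (T_alg (card V - 1)))"
proof -
  have s_nonzero: "\<forall>x\<in>V. s x \<noteq> 0"
    using kernel_vanishing_at_vertex[OF connected s(3,1)] s(2) by blast
  obtain x0 where x0: "x0 \<in> V"
    using E_nonempty edge by fastforce
  obtain z g where "hyperplane_image (NG V E :: ('a, 'a set, 'f) nalg) L z g (card E - 1)"
    by (rule hyperplane_image_NG)
  then interpret H: hyperplane_image "NG V E :: ('a, 'a set, 'f) nalg" L z g "card E - 1" .
  have iso: "nalg_iso (NG V E :: ('a, 'a set, 'f) nalg)
      (nalg_sum (F0 :: (unit, nat, 'f) nalg) (T_alg (card E - 1)))"
    using H.nalg_iso_sum_F0_T_alg[of s x0] s s_nonzero x0
      kernel_vanishing_at_vertex[OF connected _ _ x0]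
    by (simp add: Uvec_NG) blast
  then have "card V = card E - 1 + 1"
    using nalg_iso_card_ubasis[OF iso] finite_V
      card_ubasis_sum_F0[of "T_alg (card E - 1) :: (nat, nat, 'f) nalg"]
    by (simp add: ubasis_NG ubasis_T_alg)
  then have card: "card E = card V"
    using card_E_pos by simp
  then have "\<And>x. x \<in> V \<Longrightarrow> card {y. adj E x y} = 2"
    by (rule two_regular_if_card_E_eq_card_V)
  then have cycle: "is_cycle V E"
    using connected_two_regular_is_cycle[OF connected] x0 by blast
  moreover have "even (card V)"
    using even_cycle_if_alternating[OF cycle char s(3) s_nonzero] .
  moreover have "3 \<le> card V"
    using cycle by (simp add: is_cycle_def)
  ultimately have "4 \<le> card V" and "is_even_cycle V E"
    by (auto simp: is_even_cycle_def elim: oddE)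
  then show ?thesis
    using card iso by simp
qed

end

theorem theorem7p2:
  fixes V :: "'a set" and E :: "'a set set"
  assumes graph: "simple_graph V E"
    and conn: "connected_graph V E"
    and char: "(2::'f::field) \<noteq> 0"
    and pairs: "\<forall>e1\<in>E. \<forall>e2\<in>E. e1 \<noteq> e2 \<longrightarrow>
        (\<exists>u \<in> Uvec (NG V E :: ('a, 'a set, 'f) nalg).
            zsupport E (nprod (NG V E :: ('a, 'a set, 'f) nalg) u u) = {e1, e2})"
    and not_sq: "\<not> edge_square V E TYPE('f)"
  shows "card V \<ge> 4 \<and> (card E = card V \<or> card E = card V + 1) \<and>
    (card E = card V \<longrightarrow> is_even_cycle V E \<and>
        nalg_iso (NG V E :: ('a, 'a set, 'f) nalg) (nalg_sum (F0 :: (unit, nat, 'f) nalg) (T_alg (card V - 1)))) \<and>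
    (card E = card V + 1 \<longrightarrow>
        nalg_iso (NG V E :: ('a, 'a set, 'f) nalg) (T_alg (card V) :: (nat, nat, 'f) nalg))"
proof -
  interpret square_pairs_graph V E "TYPE('f)"
    using graph conn pairs not_sq by unfold_locales
  show ?thesis
  proof (cases "inj_on L (coord_space V)")
    case True
    then show ?thesis
      using incidence_injective_case by simp
  next
    case False
    then obtain a b where "a \<in> coord_space V" "b \<in> coord_space V" "a \<noteq> b" "L a = L b"
      unfolding inj_on_def by blast
    then have "a - b \<in> coord_space V" "a - b \<noteq> 0" "L (a - b) = 0"
      by (simp_all add: incidence_diff)
    then show ?thesis
      using incidence_kernel_case[OF char] by simp
  qed
qed

end
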